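(* Let $G$ be the group given by the presentation $$G=\langle\, a,s,t \mid a^2=1,\ [a,a^t]=1,\ [s,t]=1,\ a^s=aa^t \,\rangle,$$ and let $\mathcal A=\{a,s,t,at,ta,ata,as,sa,asa\}$. Then $G$ is finitely presented and has unbounded dead-end depth with respect to $\mathcal A$: for every $N\ge 1$ there is an element $g\in G$ whose depth with respect to $\mathcal A$ is at least $N$.
   Context: Notation: $[x,y]=x^{-1}y^{-1}xy$ and $x^y=y^{-1}xy$. For a finite generating set $\mathcal A$ of a group $G$, $d_{\mathcal A}$ denotes the word metric, i.e. the path metric on the Cayley graph of $(G,\mathcal A)$; here $d_{\mathcal A}(g,h)$ is the length of a shortest word in $\mathcal A\cup\mathcal A^{-1}$ representing $g^{-1}h$. The depth of $g\in G$ with respect to $\mathcal A$ is the distance, in $d_{\mathcal A}$, from $g$ to the complement in $G$ of the closed ball $\{h\in G: d_{\mathcal A}(1,h)\le d_{\mathcal A}(1,g)\}$. The group $G$ has unbounded dead-end depth with respect to $\mathcal A$ if the depths of its elements are not bounded above. *)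

theory Defs
  imports Main
begin

datatype gen = Ga | Gs | Gt

(* a letter is a generator together with an exponent sign: (x, False) = x, (x, True) = x^-1 *)
type_synonym letter = "gen \<times> bool"
type_synonym word = "letter list"

definition flip :: "letter \<Rightarrow> letter" where
  "flip l = (fst l, \<not> snd l)"

definition winv :: "word \<Rightarrow> word" where
  "winv w = rev (map flip w)"

abbreviation la :: word where "la \<equiv> [(Ga, False)]"
abbreviation ls :: word where "ls \<equiv> [(Gs, False)]"
abbreviation lt :: word where "lt \<equiv> [(Gt, False)]"

definition wconj :: "word \<Rightarrow> word \<Rightarrow> word" where
  "wconj x y = winv y @ x @ y"

definition wcomm :: "word \<Rightarrow> word \<Rightarrow> word" where
  "wcomm x y = winv x @ winv y @ x @ y"

(* relators (relations r = 1, resp. u = v rewritten as u v^-1 = 1) *)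
definition G_relators :: "word set" where
  "G_relators =
     { la @ la,
       wcomm la (wconj la lt),
       wcomm ls lt,
       wconj la ls @ winv (la @ wconj la lt) }"

inductive G_eq :: "word \<Rightarrow> word \<Rightarrow> bool" where
  G_refl: "G_eq u u"
| G_sym: "G_eq u v \<Longrightarrow> G_eq v u"
| G_trans: "G_eq u v \<Longrightarrow> G_eq v w \<Longrightarrow> G_eq u w"
| G_cancel: "G_eq (u @ [x, flip x] @ v) (u @ v)"
| G_rel: "r \<in> G_relators \<Longrightarrow> G_eq (u @ r @ v) (u @ v)"

(* elements of G are represented by words over {a,s,t}^{\<pm>1}; two words represent the
   same element iff G_eq holds *)

definition A_set :: "word set" where
  "A_set = { la, ls, lt, la @ lt, lt @ la, la @ lt @ la, la @ ls, ls @ la, la @ ls @ la }"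

definition A_sym :: "word set" where
  "A_sym = A_set \<union> winv ` A_set"

definition dA :: "word \<Rightarrow> word \<Rightarrow> nat" where
  "dA g h = Inf { length ws | ws. set ws \<subseteq> A_sym \<and> G_eq (concat ws) (winv g @ h) }"

definition normA :: "word \<Rightarrow> nat" where
  "normA g = dA [] g"

definition depthA :: "word \<Rightarrow> nat" where
  "depthA g = Inf { dA g h | h. normA g < normA h }"

end

(* Write lamp (m, n) for the conjugate of a by t^m s^n. The relations make the lamps commuting
   involutions with lamp (m, n - 1) = lamp (m, n) + lamp (m - 1, n), so every element is a
   product of lamps over a finite set of points of Z^2 followed by a translation t^m s^n:
   reading a word, s and t move a cursor and each a toggles the lamp under it.

   For every phi : Z^2 -> F_2 satisfying phi (m, n - 1) = phi (m, n) + phi (m - 1, n)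
   the parity of phi over the lit lamps is an invariant of the element; binomial coefficients
   mod 2 give such phi supported on cones. For the element g with lamps at (k, k), (-k, -k) and
   cursor at the origin, three such cones force every word for g to visit x >= k, y >= k and
   x + y <= -2k and to come back; as a letter of A moves the cursor at most one step, |g| = 8k.

   If |u| < N, the lamps of u lie within distance N of the origin, and the relation
   pushes them onto the column x = N, rows -3N .. N. For k = 3N a single tour of length at most
   8k passes through both corners and along that column and ends at the cursor of u, so it
   spells g u and |g u| <= |g|. Hence g has depth at least N. *)

theory Submission
  imports Defs "HOL-Library.Product_Plus" "HOL-Library.Sublist"
begin

section \<open>Commutation and integer multiples in groups\<close>

text \<open>Terms of a noncommutative \<open>group_add\<close> are normalised with \<open>group_simps\<close>, which needs
  \<open>x + - y\<close> not to be rewritten to \<open>x - y\<close>.\<close>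

bundle no_minus_to_diff
begin
declare add_uminus_conv_diff [simp del]
end

context
  includes no_minus_to_diff
begin

lemmas group_simps = add.assoc minus_add add_minus_cancel minus_add_cancel

lemma commutator_eq_0_iff: "- x + - y + x + y = 0 \<longleftrightarrow> x + y = y + (x::'a::group_add)"
proof -
  have "- x + - y + x + y = - (y + x) + (x + y)" by (simp add: group_simps)
  then show ?thesis by (simp only: add_eq_0_iff minus_minus)
qed

fun nmul :: "nat \<Rightarrow> 'a::group_add \<Rightarrow> 'a" where
  "nmul 0 x = 0"
| "nmul (Suc n) x = nmul n x + x"

definition zmul :: "int \<Rightarrow> 'a::group_add \<Rightarrow> 'a" where
  "zmul m x = (if 0 \<le> m then nmul (nat m) x else - nmul (nat (- m)) x)"

lemma commute_minus: "x + y = y + x \<Longrightarrow> x + - y = - y + (x::'a::group_add)"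
proof -
  assume "x + y = y + x"
  then have "- y + (x + y) + - y = - y + (y + x) + - y" by simp
  then show ?thesis by (simp add: group_simps)
qed

lemma nmul_commute: "x + y = y + x \<Longrightarrow> x + nmul n y = nmul n y + (x::'a::group_add)"
proof (induction n)
  case (Suc n)
  have "x + nmul (Suc n) y = (x + nmul n y) + y" by (simp add: group_simps)
  also have "\<dots> = nmul n y + (x + y)" using Suc by (simp add: group_simps)
  also have "\<dots> = nmul (Suc n) y + x" using Suc.prems by (simp add: group_simps)
  finally show ?case .
qed simp

lemma zmul_commute: "x + y = y + x \<Longrightarrow> x + zmul m y = zmul m y + (x::'a::group_add)"
  using nmul_commute[of x y] commute_minus[OF nmul_commute[of x y]] by (simp add: zmul_def)

lemma zmul_0 [simp]: "zmul 0 x = 0"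
  by (simp add: zmul_def)

lemma zmul_succ: "zmul (m + 1) x = zmul m x + (x::'a::group_add)"
proof (cases "0 \<le> m")
  case True
  then have "nat (m + 1) = Suc (nat m)" by simp
  with True show ?thesis by (simp add: zmul_def)
next
  case False
  define j where "j = nat (- m) - 1"
  have j: "nat (- m) = Suc j" "nat (- (m + 1)) = j" using False by (auto simp: j_def)
  have c: "x + - nmul j x = - nmul j x + x"
    by (rule commute_minus) (simp add: nmul_commute)
  have "- nmul (Suc j) x + x = - nmul j x"
    by (simp add: group_simps c[symmetric])
  with False j show ?thesis
    by (cases "0 \<le> m + 1") (auto simp: zmul_def)
qed

lemma zmul_pred: "zmul (m - 1) x = zmul m x + - (x::'a::group_add)"
  using zmul_succ[of "m - 1" x] by (simp add: group_simps)

lemma zmul_1: "zmul 1 x = x"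
  using zmul_succ[of 0 x] by simp

lemma zmul_minus1: "zmul (- 1) x = - x"
  using zmul_pred[of 0 x] by simp

lemma zmul_add: "zmul (m + n) x = zmul m x + zmul n (x::'a::group_add)"
proof (induction n rule: int_induct[where k = 0])
  case (step1 i)
  have "zmul (m + (i + 1)) x = zmul (m + i) x + x"
    using zmul_succ[of "m + i"] by (simp add: group_simps)
  then show ?case using step1 zmul_succ[of i x] by (simp add: group_simps)
next
  case (step2 i)
  have "zmul (m + (i - 1)) x = zmul (m + i) x + - x"
    using zmul_pred[of "m + i"] by (simp add: algebra_simps)
  then show ?case using step2 zmul_pred[of i x] by (simp add: group_simps)
qed simp

lemma conj_add: "c + (x + y) + - c = (c + x + - c) + (c + y + - (c::'a::group_add))"
  by (simp add: group_simps)

lemma commute_of_commuting_products: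
  fixes x0 x1 y0 y1 :: "'a::group_add"
  assumes "y1 + x1 = x1 + y1" and "x1 + y0 = y0 + x1" and "x0 + y1 = y1 + x0"
    and "(x1 + x0) + (y0 + y1) = (y0 + y1) + (x1 + x0)"
  shows "x0 + y0 = y0 + x0"
proof -
  have "(y0 + y1) + (x1 + x0) = y0 + (y1 + x1) + x0" by (simp add: add.assoc)
  also have "\<dots> = (x1 + y0) + (x0 + y1)" using assms(1-3) by (simp add: add.assoc)
  finally have "x1 + ((x0 + y0) + y1) = x1 + ((y0 + x0) + y1)"
    using assms(4) by (simp add: add.assoc)
  then show ?thesis by simp
qed

end

section \<open>The group as a quotient of words\<close>

lemma flip_flip [simp]: "flip (flip x) = x"
  by (simp add: flip_def)

lemma winv_Nil [simp]: "winv [] = []"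
  by (simp add: winv_def)

lemma winv_Cons [simp]: "winv (x # u) = winv u @ [flip x]"
  by (simp add: winv_def)

lemma winv_append [simp]: "winv (u @ v) = winv v @ winv u"
  by (simp add: winv_def)

lemma winv_winv [simp]: "winv (winv u) = u"
  by (induction u) auto

lemma G_eq_in_context: "G_eq u v \<Longrightarrow> G_eq (x @ u @ y) (x @ v @ y)"
proof (induction rule: G_eq.induct)
  case (G_cancel u z v)
  have "G_eq ((x @ u) @ [z, flip z] @ (v @ y)) ((x @ u) @ (v @ y))"
    by (rule G_eq.G_cancel)
  then show ?case by simp
next
  case (G_rel r u v)
  have "G_eq ((x @ u) @ r @ (v @ y)) ((x @ u) @ (v @ y))"
    using G_rel by (rule G_eq.G_rel)
  then show ?case by simp
qed (auto intro: G_eq.intros)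

lemma G_eq_append: "G_eq u u' \<Longrightarrow> G_eq v v' \<Longrightarrow> G_eq (u @ v) (u' @ v')"
  using G_eq_in_context[of u u' "[]" v] G_eq_in_context[of v v' u' "[]"]
  by (auto intro: G_eq.G_trans)

lemma G_eq_winv_right: "G_eq (u @ winv u) []"
proof (induction u)
  case Nil
  then show ?case by (simp add: G_eq.G_refl)
next
  case (Cons x u)
  have "G_eq ([x] @ (u @ winv u) @ [flip x]) ([x] @ [] @ [flip x])"
    using G_eq_in_context[OF Cons] by blast
  moreover have "G_eq ([] @ [x, flip x] @ []) ([] @ [])"
    by (rule G_eq.G_cancel)
  ultimately show ?case by (auto intro: G_eq.G_trans)
qed

lemma G_eq_winv_left: "G_eq (winv u @ u) []"
  using G_eq_winv_right[of "winv u"] by simp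

lemma equivp_G_eq: "equivp G_eq"
  by (rule equivpI) (auto simp: reflp_def symp_def transp_def intro: G_eq.intros)

text \<open>\<open>grp\<close> is not commutative; it is written additively only because \<open>group_add\<close> is
  the type class of groups.\<close>

quotient_type grp = word / G_eq
  by (rule equivp_G_eq)

instantiation grp :: group_add
begin

lift_definition zero_grp :: grp is "[]" .

lift_definition plus_grp :: "grp \<Rightarrow> grp \<Rightarrow> grp" is "(@)"
  by (rule G_eq_append)

lift_definition uminus_grp :: "grp \<Rightarrow> grp" is winv
proof -
  fix u v
  assume "G_eq u v"
  then have "G_eq (winv u @ v @ winv v) (winv u @ u @ winv v)"
    using G_eq_in_context G_eq.G_sym by blast
  moreover have "G_eq (winv u @ v @ winv v) (winv u @ [])"
    using G_eq_append[OF G_eq.G_refl G_eq_winv_right] by blast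
  moreover have "G_eq ((winv u @ u) @ winv v) ([] @ winv v)"
    using G_eq_append[OF G_eq_winv_left G_eq.G_refl] by blast
  ultimately show "G_eq (winv u) (winv v)"
    by (auto intro: G_eq.intros)
qed

definition minus_grp :: "grp \<Rightarrow> grp \<Rightarrow> grp" where
  "minus_grp x y = x + - y"

instance
proof
  fix a b c :: grp
  show "a + b + c = a + (b + c)" by transfer (simp add: G_eq.G_refl)
  show "0 + a = a" by transfer (simp add: G_eq.G_refl)
  show "a + 0 = a" by transfer (simp add: G_eq.G_refl)
  show "- a + a = 0" by transfer (rule G_eq_winv_left)
  show "a + - b = a - b" by (simp add: minus_grp_def)
qed

end

lemma abs_grp_Nil: "abs_grp [] = 0"
  by (simp add: zero_grp.abs_eq)

lemma abs_grp_append: "abs_grp (u @ v) = abs_grp u + abs_grp v"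
  by (simp add: plus_grp.abs_eq)

lemma abs_grp_winv: "abs_grp (winv u) = - abs_grp u"
  by (simp add: uminus_grp.abs_eq)

lemma abs_grp_relator: "r \<in> G_relators \<Longrightarrow> abs_grp r = 0"
  using G_eq.G_rel[of r "[]" "[]"] by (simp add: grp.abs_eq_iff flip: abs_grp_Nil)

context
  includes no_minus_to_diff
begin

definition elt_a :: grp where "elt_a = abs_grp la"
definition elt_s :: grp where "elt_s = abs_grp ls"
definition elt_t :: grp where "elt_t = abs_grp lt"

lemma abs_grp_conj: "abs_grp (wconj x y) = - abs_grp y + abs_grp x + abs_grp y"
  by (simp add: wconj_def abs_grp_append abs_grp_winv group_simps)

lemma abs_grp_comm: "abs_grp (wcomm x y) = - abs_grp x + - abs_grp y + abs_grp x + abs_grp y"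
  by (simp add: wcomm_def abs_grp_append abs_grp_winv group_simps)

lemma elt_a_order_two: "elt_a + elt_a = 0"
  using abs_grp_relator[of "la @ la"] by (simp only: G_relators_def abs_grp_append elt_a_def) simp

lemma elt_a_commutes_conj_t: "elt_a + (- elt_t + elt_a + elt_t) = (- elt_t + elt_a + elt_t) + elt_a"
proof -
  have "wcomm la (wconj la lt) \<in> G_relators" by (simp add: G_relators_def)
  from abs_grp_relator[OF this]
  have "- elt_a + - (- elt_t + elt_a + elt_t) + elt_a + (- elt_t + elt_a + elt_t) = 0"
    by (simp only: abs_grp_comm abs_grp_conj elt_a_def elt_t_def)
  then show ?thesis by (simp only: commutator_eq_0_iff)
qed

lemma elt_s_t_commute: "elt_t + elt_s = elt_s + elt_t"
proof -
  have "wcomm ls lt \<in> G_relators" by (simp add: G_relators_def)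
  from abs_grp_relator[OF this] have "- elt_s + - elt_t + elt_s + elt_t = 0"
    by (simp only: abs_grp_comm elt_s_def elt_t_def)
  then show ?thesis by (simp only: commutator_eq_0_iff)
qed

lemma elt_a_conj_s: "- elt_s + elt_a + elt_s = elt_a + (- elt_t + elt_a + elt_t)"
proof -
  have "wconj la ls @ winv (la @ wconj la lt) \<in> G_relators" by (simp add: G_relators_def)
  from abs_grp_relator[OF this]
  have "(- elt_s + elt_a + elt_s) + - (elt_a + (- elt_t + elt_a + elt_t)) = 0"
    by (simp only: abs_grp_conj abs_grp_append abs_grp_winv elt_a_def elt_s_def elt_t_def)
  then show ?thesis by (simp only: add_eq_0_iff2 minus_minus)
qed

section \<open>Lamps\<close>

definition transl :: "int \<times> int \<Rightarrow> grp" where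
  "transl p = zmul (fst p) elt_t + zmul (snd p) elt_s"

lemma transl_add: "transl p + transl q = transl (p + q)"
proof -
  have swap: "zmul n elt_s + zmul m elt_t = zmul m elt_t + zmul n elt_s" for m n
    by (intro zmul_commute[symmetric] zmul_commute elt_s_t_commute)
  have "transl p + transl q
      = zmul (fst p) elt_t + (zmul (snd p) elt_s + zmul (fst q) elt_t) + zmul (snd q) elt_s"
    by (simp add: transl_def group_simps)
  also have "\<dots>
      = zmul (fst p) elt_t + (zmul (fst q) elt_t + zmul (snd p) elt_s) + zmul (snd q) elt_s"
    by (simp only: swap)
  also have "\<dots> = transl (p + q)"
    by (simp add: transl_def zmul_add group_simps)
  finally show ?thesis .
qed

lemma transl_0 [simp]: "transl 0 = 0" "transl (0, 0) = 0"
  by (simp_all add: transl_def)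

lemma transl_units: "transl (1, 0) = elt_t" "transl (- 1, 0) = - elt_t"
  "transl (0, 1) = elt_s" "transl (0, - 1) = - elt_s"
  by (simp_all add: transl_def zmul_1 zmul_minus1)

definition lamp :: "int \<times> int \<Rightarrow> grp" where
  "lamp p = transl p + elt_a + - transl p"

lemma transl_minus: "- transl p = transl (- p)"
  using transl_add[of p "- p"] by (intro minus_unique) (simp add: zero_prod_def)

lemma lamp_conj: "transl d + lamp p + - transl d = lamp (d + p)"
  by (simp add: lamp_def group_simps transl_minus transl_add[symmetric])

lemma lamp_twice: "lamp p + lamp p = 0"
proof -
  have "lamp p + lamp p = transl p + (elt_a + elt_a) + - transl p"
    by (simp add: lamp_def group_simps)
  then show ?thesis by (simp add: elt_a_order_two)
qed

lemma lamp_origin: "lamp (0, 0) = elt_a"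
  by (simp add: lamp_def)

lemma lamp_pascal: "lamp (m, n - 1) = lamp (m, n) + lamp (m - 1, n)"
proof -
  have "lamp (0, - 1) = lamp (0, 0) + lamp (- 1, 0)"
    using elt_a_conj_s by (simp add: lamp_def transl_units lamp_origin)
  then have "transl (m, n) + lamp (0, - 1) + - transl (m, n)
      = transl (m, n) + (lamp (0, 0) + lamp (- 1, 0)) + - transl (m, n)"
    by simp
  then show ?thesis by (simp only: conj_add lamp_conj) (simp add: add_uminus_conv_diff)
qed

lemma lamp_left_neighbour_commute: "lamp (m, n) + lamp (m - 1, n) = lamp (m - 1, n) + lamp (m, n)"
proof -
  have "lamp (0, 0) + lamp (- 1, 0) = lamp (- 1, 0) + lamp (0, 0)"
    using elt_a_commutes_conj_t by (simp add: lamp_def transl_units lamp_origin)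
  then have "transl (m, n) + (lamp (0, 0) + lamp (- 1, 0)) + - transl (m, n)
      = transl (m, n) + (lamp (- 1, 0) + lamp (0, 0)) + - transl (m, n)"
    by simp
  then show ?thesis by (simp only: conj_add lamp_conj) (simp add: add_uminus_conv_diff)
qed

text \<open>Induction on the distance \<open>d\<close>: writing the lamps at \<open>(i+1, n-1)\<close> and
  \<open>(i+d, n-1)\<close> as products of two lamps of row \<open>n\<close> by \<open>lamp_pascal\<close> reduces
  commutation at distance \<open>d\<close> to commutation at distances \<open>d-1\<close> and \<open>d-2\<close>.\<close>

lemma lamp_same_row_commute_dist:
  "lamp (i, n) + lamp (i + int d, n) = lamp (i + int d, n) + lamp (i, n)"
proof (induction d arbitrary: i n rule: less_induct)
  case (less d)
  show ?case
  proof (cases "d \<le> 1")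
    case True
    then consider "d = 0" | "d = 1" by linarith
    then show ?thesis
      using lamp_left_neighbour_commute[of "i + 1" n] by cases simp_all
  next
    case False
    have IH1: "lamp (j, m) + lamp (j + int d - 1, m) = lamp (j + int d - 1, m) + lamp (j, m)"
      for j m
      using less.IH[of "d - 1" j m] False by (simp add: of_nat_diff algebra_simps)
    have IH2:
      "lamp (i + 1, n) + lamp (i + int d - 1, n) = lamp (i + int d - 1, n) + lamp (i + 1, n)"
      using less.IH[of "d - 2" "i + 1" n] False by (simp add: of_nat_diff algebra_simps)
    show ?thesis
    proof (rule commute_of_commuting_products)
      show "lamp (i + int d - 1, n) + lamp (i + 1, n) = lamp (i + 1, n) + lamp (i + int d - 1, n)"
        using IH2 by simp
      show "lamp (i + 1, n) + lamp (i + int d, n) = lamp (i + int d, n) + lamp (i + 1, n)"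
        using IH1[of "i + 1" n] by simp
      show "lamp (i, n) + lamp (i + int d - 1, n) = lamp (i + int d - 1, n) + lamp (i, n)"
        using IH1[of i n] by simp
      show "(lamp (i + 1, n) + lamp (i, n)) + (lamp (i + int d, n) + lamp (i + int d - 1, n))
          = (lamp (i + int d, n) + lamp (i + int d - 1, n)) + (lamp (i + 1, n) + lamp (i, n))"
        using IH1[of "i + 1" "n - 1"] lamp_pascal[of "i + 1" n] lamp_pascal[of "i + int d" n]
        by simp
    qed
  qed
qed

lemma lamp_same_row_commute: "lamp (i, n) + lamp (j, n) = lamp (j, n) + lamp (i, n)"
proof (cases "i \<le> j")
  case True
  then show ?thesis using lamp_same_row_commute_dist[of i n "nat (j - i)"] by simp
next
  case False
  then show ?thesis using lamp_same_row_commute_dist[of j n "nat (i - j)"] by simp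
qed

text \<open>By \<open>lamp_pascal\<close> every lamp below row \<open>n\<close> is a product of lamps of row \<open>n\<close>, and these
  commute; so any two lamps commute.\<close>

inductive_set row_span :: "int \<Rightarrow> grp set" for n where
  row_span_0: "0 \<in> row_span n"
| row_span_lamp: "x \<in> row_span n \<Longrightarrow> x + lamp (i, n) \<in> row_span n"

lemma row_span_commute_lamp: "x \<in> row_span n \<Longrightarrow> lamp (i, n) + x = x + lamp (i, n)"
proof (induction rule: row_span.induct)
  case (row_span_lamp x j)
  have "lamp (i, n) + (x + lamp (j, n)) = x + (lamp (i, n) + lamp (j, n))"
    using row_span_lamp.IH by (simp add: add.assoc[symmetric])
  also have "\<dots> = x + lamp (j, n) + lamp (i, n)"
    using lamp_same_row_commute[of i n j] by (simp add: add.assoc)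
  finally show ?case .
qed simp

lemma row_span_commute: "y \<in> row_span n \<Longrightarrow> x \<in> row_span n \<Longrightarrow> x + y = y + x"
proof (induction rule: row_span.induct)
  case (row_span_lamp y j)
  have "x + (y + lamp (j, n)) = y + (x + lamp (j, n))"
    using row_span_lamp by (simp add: add.assoc[symmetric])
  also have "\<dots> = y + lamp (j, n) + x"
    using row_span_commute_lamp[OF row_span_lamp.prems, of j] by (simp add: add.assoc)
  finally show ?case .
qed simp

lemma row_span_add: "y \<in> row_span n \<Longrightarrow> x \<in> row_span n \<Longrightarrow> x + y \<in> row_span n"
  by (induction rule: row_span.induct) (auto simp flip: add.assoc intro: row_span.intros)

lemma lamp_in_row_span: "snd p \<le> n \<Longrightarrow> lamp p \<in> row_span n"
proof -
  have lower_rows: "lamp (m, n - int j) \<in> row_span n" for m j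
  proof (induction j arbitrary: m)
    case 0
    have "0 + lamp (m, n) \<in> row_span n" by (intro row_span.intros)
    then show ?case by simp
  next
    case (Suc j)
    have "lamp (m, n - int (Suc j)) = lamp (m, n - int j) + lamp (m - 1, n - int j)"
      using lamp_pascal[of m "n - int j"] by (simp add: algebra_simps)
    then show ?case using row_span_add[OF Suc.IH Suc.IH] by simp
  qed
  moreover obtain a b where "p = (a, b)" by fastforce
  moreover assume "snd p \<le> n"
  ultimately show ?thesis using lower_rows[of a "nat (n - b)"] by simp
qed

lemma lamps_commute: "lamp p + lamp q = lamp q + lamp p"
  using row_span_commute[OF lamp_in_row_span lamp_in_row_span, of q "max (snd p) (snd q)" p]
  by simp

definition lamps :: "(int \<times> int) set \<Rightarrow> grp" where
  "lamps S = Finite_Set.fold (\<lambda>p x. lamp p + x) 0 S"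

interpretation lamps_fold: comp_fun_commute "\<lambda>p x. lamp p + x"
proof
  fix p q
  have "lamp p + (lamp q + x) = lamp q + (lamp p + x)" for x
    by (simp add: add.assoc[symmetric] lamps_commute[of p q])
  then show "(\<lambda>x. lamp p + x) \<circ> (\<lambda>x. lamp q + x) = (\<lambda>x. lamp q + x) \<circ> (\<lambda>x. lamp p + x)"
    by (simp add: fun_eq_iff)
qed

lemma lamps_empty [simp]: "lamps {} = 0"
  by (simp add: lamps_def)

lemma lamps_insert: "finite S \<Longrightarrow> p \<notin> S \<Longrightarrow> lamps (insert p S) = lamp p + lamps S"
  by (simp add: lamps_def)

lemma lamps_singleton: "lamps {p} = lamp p"
  using lamps_insert[of "{}" p] by simp

lemma lamps_commute_lamp: "finite S \<Longrightarrow> lamp p + lamps S = lamps S + lamp p"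
proof (induction rule: finite_induct)
  case (insert q S)
  have "lamp p + lamps (insert q S) = lamp q + (lamp p + lamps S)"
    using insert.hyps by (simp add: lamps_insert add.assoc[symmetric] lamps_commute[of p q])
  also have "\<dots> = lamps (insert q S) + lamp p"
    using insert by (simp add: lamps_insert add.assoc)
  finally show ?case .
qed simp

lemma lamps_toggle: "finite S \<Longrightarrow> lamps (sym_diff S {p}) = lamp p + lamps S"
proof (cases "p \<in> S")
  case True
  assume "finite S"
  moreover have "S = insert p (S - {p})" using True by auto
  ultimately have "lamps S = lamp p + lamps (S - {p})"
    using lamps_insert[of "S - {p}" p] by simp
  moreover have "sym_diff S {p} = S - {p}" using True by auto
  ultimately show ?thesis by (simp add: add.assoc[symmetric] lamp_twice)
next
  case False
  assume "finite S"
  moreover have "sym_diff S {p} = insert p S" using False by auto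
  ultimately show ?thesis using lamps_insert False by simp
qed

lemma lamps_sym_diff: "finite T \<Longrightarrow> finite S \<Longrightarrow> lamps S + lamps T = lamps (sym_diff S T)"
proof (induction T rule: finite_induct)
  case (insert p T)
  have "lamps S + lamps (insert p T) = (lamps S + lamp p) + lamps T"
    using insert.hyps by (simp add: lamps_insert add.assoc)
  also have "\<dots> = (lamp p + lamps S) + lamps T"
    using lamps_commute_lamp[OF insert.prems] by simp
  also have "\<dots> = lamp p + lamps (sym_diff S T)"
    using insert.IH[OF insert.prems] by (simp add: add.assoc)
  also have "\<dots> = lamps (sym_diff (sym_diff S T) {p})"
    using insert.prems insert.hyps(1) by (simp add: lamps_toggle)
  also have "sym_diff (sym_diff S T) {p} = sym_diff S (insert p T)"
    using insert.hyps by auto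
  finally show ?case .
qed simp

end

text \<open>Read backwards, \<open>lamp_pascal\<close> moves a lamp one step to the right at the cost of a
  second lamp one row lower; iterating pushes every lamp onto a prescribed column.\<close>

lemma lamp_push_to_column:
  assumes "m \<le> c"
  obtains D where "finite D" "D \<subseteq> {c} \<times> {n - (c - m)..n}" "lamp (m, n) = lamps D"
proof -
  have "\<exists>D. finite D \<and> D \<subseteq> {c} \<times> {n - int j..n} \<and> lamp (c - int j, n) = lamps D" for j n
  proof (induction j arbitrary: n)
    case 0
    then show ?case by (intro exI[of _ "{(c, n)}"]) (simp add: lamps_singleton)
  next
    case (Suc j)
    obtain D1 where D1: "finite D1" "D1 \<subseteq> {c} \<times> {n - int j..n}" "lamp (c - int j, n) = lamps D1"
      using Suc.IH by blast
    obtain D2 where D2: "finite D2" "D2 \<subseteq> {c} \<times> {n - 1 - int j..n - 1}"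
      "lamp (c - int j, n - 1) = lamps D2"
      using Suc.IH by blast
    have "lamp (c - int j, n - 1) = lamp (c - int j, n) + lamp (c - int (Suc j), n)"
      using lamp_pascal[of "c - int j" n] by (simp add: algebra_simps)
    then have "lamp (c - int (Suc j), n) = lamp (c - int j, n) + lamp (c - int j, n - 1)"
      by (simp add: add.assoc[symmetric] lamp_twice)
    then have "lamp (c - int (Suc j), n) = lamps (sym_diff D1 D2)"
      using lamps_sym_diff[OF D2(1) D1(1)] D1(3) D2(3) by simp
    moreover have "D1 \<union> D2 \<subseteq> {c} \<times> {n - int (Suc j)..n}"
      using D1(2) D2(2) by (auto 0 3)
    ultimately show ?case using D1(1) D2(1) by (intro exI[of _ "sym_diff D1 D2"]) blast
  qed
  from this[where j = "nat (c - m)" and n = n] assms that show thesis by simp blast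
qed

lemma lamps_push_to_column:
  assumes "finite S" and "\<forall>(m, n) \<in> S. m \<le> c \<and> lo \<le> n - (c - m) \<and> n \<le> hi"
  obtains D where "finite D" "D \<subseteq> {c} \<times> {lo..hi}" "lamps S = lamps D"
proof -
  from assms have "\<exists>D. finite D \<and> D \<subseteq> {c} \<times> {lo..hi} \<and> lamps S = lamps D"
  proof (induction S rule: finite_induct)
    case (insert p S)
    obtain D1 where D1: "finite D1" "D1 \<subseteq> {c} \<times> {lo..hi}" "lamps S = lamps D1"
      using insert by auto
    obtain m n where p: "p = (m, n)" by fastforce
    with insert.prems have mn: "m \<le> c" "lo \<le> n - (c - m)" "n \<le> hi" by auto
    obtain D2 where D2: "finite D2" "D2 \<subseteq> {c} \<times> {n - (c - m)..n}" "lamp (m, n) = lamps D2"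
      using lamp_push_to_column[OF mn(1)] by blast
    have "lamps (insert p S) = lamps D2 + lamps D1"
      using insert.hyps D1(3) D2(3) p by (simp add: lamps_insert)
    also have "\<dots> = lamps (sym_diff D2 D1)"
      using D1(1) D2(1) by (rule lamps_sym_diff)
    finally have "lamps (insert p S) = lamps (sym_diff D2 D1)" .
    moreover have "D2 \<union> D1 \<subseteq> {c} \<times> {lo..hi}"
      using D1(2) D2(2) mn by (auto 0 3)
    ultimately show ?case using D1(1) D2(1) by (intro exI[of _ "sym_diff D2 D1"]) blast
  qed (intro exI[of _ "{}"], simp)
  with that show thesis by blast
qed

section \<open>Normal form\<close>

definition letter_shift :: "letter \<Rightarrow> int \<times> int" where
  "letter_shift x = (case fst x of
     Ga \<Rightarrow> (0, 0)
   | Gt \<Rightarrow> (if snd x then - 1 else 1, 0)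
   | Gs \<Rightarrow> (0, if snd x then - 1 else 1))"

definition cursor :: "word \<Rightarrow> int \<times> int" where
  "cursor w = sum_list (map letter_shift w)"

lemma cursor_Nil [simp]: "cursor [] = 0"
  and cursor_Cons [simp]: "cursor (x # w) = letter_shift x + cursor w"
  and cursor_append [simp]: "cursor (u @ v) = cursor u + cursor v"
  by (simp_all add: cursor_def)

fun toggled :: "int \<times> int \<Rightarrow> word \<Rightarrow> (int \<times> int) set" where
  "toggled q [] = {}"
| "toggled q (x # w) =
     (if fst x = Ga then sym_diff {q} (toggled q w) else toggled (q + letter_shift x) w)"

lemma finite_toggled: "finite (toggled q w)"
  by (induction w arbitrary: q) auto

lemma letter_shift_Ga: "fst x = Ga \<Longrightarrow> letter_shift x = 0"
  by (simp add: letter_shift_def zero_prod_def)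

lemma toggled_append:
  "toggled q (u @ v) = sym_diff (toggled q u) (toggled (q + cursor u) v)"
proof (induction u arbitrary: q)
  case (Cons x u)
  show ?case
  proof (cases "fst x = Ga")
    case True
    then show ?thesis using Cons.IH by (simp add: letter_shift_Ga) blast
  next
    case False
    then show ?thesis using Cons.IH by (simp add: add.assoc)
  qed
qed simp

lemma abs_grp_letter: "abs_grp [x] = (if fst x = Ga then elt_a else transl (letter_shift x))"
proof -
  have "- elt_a = elt_a" using elt_a_order_two by (rule minus_unique)
  moreover obtain g b where "x = (g, b)" by fastforce
  ultimately show ?thesis
    using abs_grp_winv[of la] abs_grp_winv[of ls] abs_grp_winv[of lt]
    by (cases g; cases b)
      (simp_all add: elt_a_def elt_s_def elt_t_def flip_def letter_shift_def transl_units)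
qed

lemma transl_add_abs_grp:
  "transl q + abs_grp w = lamps (toggled q w) + transl (q + cursor w)"
proof (induction w arbitrary: q)
  case Nil
  show ?case by (simp add: abs_grp_Nil)
next
  case (Cons x w)
  have split: "transl q + abs_grp (x # w) = transl q + abs_grp [x] + abs_grp w"
    by (simp add: add.assoc flip: abs_grp_append)
  show ?case
  proof (cases "fst x = Ga")
    case True
    then have "transl q + abs_grp (x # w) = lamp q + (transl q + abs_grp w)"
      using split by (simp add: lamp_def abs_grp_letter diff_conv_add_uminus group_simps
          del: add_uminus_conv_diff)
    also have "\<dots> = lamps (sym_diff (toggled q w) {q}) + transl (q + cursor w)"
      using Cons.IH lamps_toggle[OF finite_toggled] by (simp add: add.assoc)
    also have "sym_diff (toggled q w) {q} = toggled q (x # w)"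
      using True by auto
    finally show ?thesis using True by (simp add: letter_shift_Ga)
  next
    case False
    then have "transl q + abs_grp (x # w) = transl (q + letter_shift x) + abs_grp w"
      using split by (simp add: abs_grp_letter transl_add)
    then show ?thesis using False Cons.IH by (simp add: add.assoc)
  qed
qed

lemma abs_grp_normal_form: "abs_grp w = lamps (toggled 0 w) + transl (cursor w)"
  using transl_add_abs_grp[of 0 w] by simp

section \<open>Pascal invariants\<close>

lemma fst_flip [simp]: "fst (flip x) = fst x"
  by (simp add: flip_def)

lemma letter_shift_flip: "letter_shift (flip x) = - letter_shift x"
  by (cases x; cases "fst x") (simp_all add: letter_shift_def flip_def)

lemma cursor_relator: "r \<in> G_relators \<Longrightarrow> cursor r = 0"
  by (auto simp: G_relators_def wcomm_def wconj_def winv_def flip_def letter_shift_def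
      zero_prod_def)

lemma G_eq_cursor: "G_eq u v \<Longrightarrow> cursor u = cursor v"
  by (induction rule: G_eq.induct) (simp_all add: letter_shift_flip cursor_relator)

text \<open>Booleans model the field with two elements, with \<open>\<noteq>\<close> as addition.\<close>

definition pascal :: "(int \<times> int \<Rightarrow> bool) \<Rightarrow> bool" where
  "pascal \<phi> \<longleftrightarrow> (\<forall>m n. \<phi> (m, n - 1) = (\<phi> (m, n) \<noteq> \<phi> (m - 1, n)))"

fun toggle_parity :: "(int \<times> int \<Rightarrow> bool) \<Rightarrow> int \<times> int \<Rightarrow> word \<Rightarrow> bool" where
  "toggle_parity \<phi> q [] = False"
| "toggle_parity \<phi> q (x # w) =
     (if fst x = Ga then \<phi> q \<noteq> toggle_parity \<phi> q w else toggle_parity \<phi> (q + letter_shift x) w)"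

lemma toggle_parity_append:
  "toggle_parity \<phi> q (u @ v) = (toggle_parity \<phi> q u \<noteq> toggle_parity \<phi> (q + cursor u) v)"
  by (induction u arbitrary: q) (auto simp: letter_shift_Ga add.assoc)

lemma toggle_parity_relator:
  assumes "r \<in> G_relators" and "pascal \<phi>"
  shows "\<not> toggle_parity \<phi> q r"
proof -
  obtain a b where "q = (a, b)" by fastforce
  moreover have "\<phi> (m, n - 1) = (\<phi> (m, n) \<noteq> \<phi> (m - 1, n))" for m n
    using assms(2) by (simp add: pascal_def)
  ultimately show ?thesis using assms(1)
    by (auto simp: G_relators_def wcomm_def wconj_def winv_def flip_def letter_shift_def)
qed

lemma G_eq_toggle_parity:
  "G_eq u v \<Longrightarrow> pascal \<phi> \<Longrightarrow> toggle_parity \<phi> q u = toggle_parity \<phi> q v"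
proof (induction rule: G_eq.induct)
  case (G_cancel u x v)
  then show ?case
    by (cases "fst x = Ga") (auto simp: toggle_parity_append letter_shift_flip add.assoc)
next
  case (G_rel r u v)
  then show ?case
    by (simp add: toggle_parity_append toggle_parity_relator cursor_relator)
qed simp_all

definition odd_on :: "(int \<times> int \<Rightarrow> bool) \<Rightarrow> (int \<times> int) set \<Rightarrow> bool" where
  "odd_on \<phi> S \<longleftrightarrow> odd (card {p \<in> S. \<phi> p})"

lemma odd_on_toggle:
  assumes "finite S"
  shows "odd_on \<phi> (sym_diff {q} S) = (\<phi> q \<noteq> odd_on \<phi> S)"
proof -
  let ?F = "{p \<in> S. \<phi> p}"
  have fin: "finite ?F" using assms by simp
  consider "\<phi> q" "q \<in> S" | "\<phi> q" "q \<notin> S" | "\<not> \<phi> q" by blast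
  then show ?thesis
  proof cases
    case 1
    then have "{p \<in> sym_diff {q} S. \<phi> p} = ?F - {q}" and "q \<in> ?F" by auto
    moreover from this(2) fin have "card ?F = Suc (card (?F - {q}))"
      by (simp only: card_Suc_Diff1)
    ultimately show ?thesis using 1 by (simp add: odd_on_def)
  next
    case 2
    then have "{p \<in> sym_diff {q} S. \<phi> p} = insert q ?F" and "q \<notin> ?F" by auto
    with fin show ?thesis using 2 by (simp add: odd_on_def)
  next
    case 3
    then have "{p \<in> sym_diff {q} S. \<phi> p} = ?F" by auto
    then show ?thesis using 3 by (simp add: odd_on_def)
  qed
qed

lemma toggle_parity_eq_odd_on: "toggle_parity \<phi> q w = odd_on \<phi> (toggled q w)"
  by (induction w arbitrary: q) (simp_all add: odd_on_toggle finite_toggled odd_on_def[of _ "{}"])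

lemma odd_on_witness: "odd_on \<phi> S \<Longrightarrow> \<exists>p \<in> S. \<phi> p"
proof -
  assume "odd_on \<phi> S"
  then have "{p \<in> S. \<phi> p} \<noteq> {}" by (intro notI) (simp add: odd_on_def)
  then show ?thesis by blast
qed

lemma odd_on_pair: "\<phi> p \<Longrightarrow> \<not> \<phi> q \<Longrightarrow> odd_on \<phi> {p, q}"
proof -
  assume "\<phi> p" "\<not> \<phi> q"
  then have "{x \<in> {p, q}. \<phi> x} = {p}" by auto
  then show ?thesis by (simp add: odd_on_def)
qed

definition visited :: "word \<Rightarrow> (int \<times> int) set" where
  "visited w = cursor ` {u. prefix u w}"

lemma visited_Nil [simp]: "visited [] = {0}"
  by (simp add: visited_def)

lemma visited_Cons: "visited (x # w) = insert 0 ((+) (letter_shift x) ` visited w)"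
proof -
  have "{u. prefix u (x # w)} = insert [] ((#) x ` {v. prefix v w})"
    by (auto simp: prefix_Cons)
  then show ?thesis by (simp add: visited_def image_image)
qed

lemma visited_append: "visited (u @ v) = visited u \<union> (+) (cursor u) ` visited v"
proof -
  have "{w. prefix w (u @ v)} = {w. prefix w u} \<union> (@) u ` {w. prefix w v}"
    by (auto simp: prefix_append)
  then show ?thesis by (simp add: visited_def image_image image_Un)
qed

lemma cursor_in_visited_self: "cursor w \<in> visited w"
  by (simp add: visited_def)

lemma toggled_subset_visited: "toggled q w \<subseteq> (+) q ` visited w"
proof (induction w arbitrary: q)
  case (Cons x w)
  show ?case
  proof (cases "fst x = Ga")
    case True
    then show ?thesis using Cons.IH[of q] by (auto simp: visited_Cons letter_shift_Ga)
  next
    case False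
    then show ?thesis using Cons.IH[of "q + letter_shift x"]
      by (auto simp: visited_Cons image_image add.assoc)
  qed
qed simp

lemma pascal_visited:
  assumes "pascal \<phi>" and "G_eq w g" and "odd_on \<phi> (toggled 0 g)"
  shows "\<exists>p \<in> visited w. \<phi> p"
proof -
  have "odd_on \<phi> (toggled 0 w)"
    using G_eq_toggle_parity[OF assms(2,1), of 0] assms(3) by (simp add: toggle_parity_eq_odd_on)
  moreover have "toggled 0 w \<subseteq> visited w" using toggled_subset_visited[of 0 w] by simp
  ultimately show ?thesis using odd_on_witness by blast
qed

text \<open>Parity of the generalised binomial coefficient \<open>r choose j\<close>, which vanishes for
  \<open>j < 0\<close>; for \<open>r = -R < 0\<close> it uses \<open>(-R choose j) = (-1)^j ((R + j - 1) choose j)\<close>.\<close>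

definition odd_binom :: "int \<Rightarrow> int \<Rightarrow> bool" where
  "odd_binom r j \<longleftrightarrow> 0 \<le> j \<and>
     (if 0 \<le> r then odd (nat r choose nat j) else odd ((nat (- r) + nat j - 1) choose nat j))"

lemma odd_binom_0: "odd_binom r 0"
  by (simp add: odd_binom_def)

lemma odd_binom_neg: "j < 0 \<Longrightarrow> \<not> odd_binom r j"
  by (simp add: odd_binom_def)

lemma odd_binom_pascal:
  assumes "1 \<le> j"
  shows "odd_binom r j = (odd_binom (r - 1) j \<noteq> odd_binom (r - 1) (j - 1))"
proof -
  obtain J where J: "nat j = Suc J" "nat (j - 1) = J"
    using assms by (intro that[of "nat j - 1"]) auto
  consider "1 \<le> r" | "r = 0" | "r < 0" by linarith
  then show ?thesis
  proof cases
    case 1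
    obtain R where "nat r = Suc R" "nat (r - 1) = R"
      using 1 by (intro that[of "nat r - 1"]) auto
    then show ?thesis using assms 1 J by (auto simp: odd_binom_def)
  next
    case 2
    then show ?thesis using assms J by (simp add: odd_binom_def)
  next
    case 3
    define R where "R = nat (- r)"
    have R: "1 \<le> R" "nat (- (r - 1)) = Suc R" using 3 by (simp_all add: R_def)
    have "Suc R + nat j - 1 = Suc (R + nat j - 1)" using R by simp
    then have "(Suc R + nat j - 1) choose nat j
        = (R + nat j - 1 choose nat (j - 1)) + (R + nat j - 1 choose nat j)"
      using J by simp
    then show ?thesis using assms 3 R J by (auto simp: odd_binom_def R_def[symmetric])
  qed
qed

definition right_cone :: "int \<times> int \<Rightarrow> bool" where
  "right_cone p = odd_binom (- snd p) (fst p)"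

definition upper_cone :: "int \<times> int \<Rightarrow> bool" where
  "upper_cone p = odd_binom (- fst p) (snd p)"

definition lower_left_cone :: "int \<times> int \<Rightarrow> bool" where
  "lower_left_cone p = odd_binom (- snd p) (- (fst p + snd p))"

lemma pascal_right_cone: "pascal right_cone"
  unfolding pascal_def
proof (intro allI)
  fix m n :: int
  consider "1 \<le> m" | "m = 0" | "m < 0" by linarith
  then show "right_cone (m, n - 1) = (right_cone (m, n) \<noteq> right_cone (m - 1, n))"
    using odd_binom_pascal[of m "- n + 1"]
    by cases (simp_all add: right_cone_def odd_binom_0 odd_binom_neg)
qed

lemma pascal_upper_cone: "pascal upper_cone"
  unfolding pascal_def
proof (intro allI)
  fix m n :: int
  consider "1 \<le> n" | "n = 0" | "n < 0" by linarith
  then show "upper_cone (m, n - 1) = (upper_cone (m, n) \<noteq> upper_cone (m - 1, n))"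
    using odd_binom_pascal[of n "- m + 1"]
    by cases (auto simp: upper_cone_def odd_binom_0 odd_binom_neg)
qed

lemma pascal_lower_left_cone: "pascal lower_left_cone"
  unfolding pascal_def
proof (intro allI)
  fix m n :: int
  consider "1 \<le> - m - n + 1" | "- m - n + 1 = 0" | "- m - n + 1 < 0" by linarith
  then show "lower_left_cone (m, n - 1) = (lower_left_cone (m, n) \<noteq> lower_left_cone (m - 1, n))"
  proof cases
    case 1
    then show ?thesis
      using odd_binom_pascal[of "- m - n + 1" "- n + 1"]
      by (auto simp: lower_left_cone_def algebra_simps)
  next
    case 2
    then have e: "- (m + (n - 1)) = 0" "- (m + n) = - 1" "- (m - 1 + n) = 0" by auto
    show ?thesis
      unfolding lower_left_cone_def fst_conv snd_conv e by (simp add: odd_binom_0 odd_binom_neg)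
  qed (simp add: lower_left_cone_def odd_binom_neg)
qed

lemma pascal_shift: "pascal \<phi> \<Longrightarrow> pascal (\<lambda>p. \<phi> (p + c))"
  unfolding pascal_def
proof (intro allI)
  fix m n
  assume "\<forall>m n. \<phi> (m, n - 1) = (\<phi> (m, n) \<noteq> \<phi> (m - 1, n))"
  moreover obtain a b where "c = (a, b)" by fastforce
  ultimately show "\<phi> ((m, n - 1) + c) = (\<phi> ((m, n) + c) \<noteq> \<phi> ((m - 1, n) + c))"
    by (auto simp: algebra_simps dest: spec[of _ "m + a"])
qed

section \<open>Lower bound\<close>

definition t_count :: "word \<Rightarrow> nat" where
  "t_count w = length (filter (\<lambda>x. fst x = Gt) w)"

definition s_count :: "word \<Rightarrow> nat" where
  "s_count w = length (filter (\<lambda>x. fst x = Gs) w)"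

lemma t_count_append [simp]: "t_count (u @ v) = t_count u + t_count v"
  by (simp add: t_count_def)

lemma s_count_append [simp]: "s_count (u @ v) = s_count u + s_count v"
  by (simp add: s_count_def)

lemma abs_fst_cursor_le: "\<bar>fst (cursor w)\<bar> \<le> int (t_count w)"
proof (induction w)
  case (Cons x w)
  then show ?case by (cases x; cases "fst x") (auto simp: letter_shift_def t_count_def)
qed (simp add: t_count_def)

lemma abs_snd_cursor_le: "\<bar>snd (cursor w)\<bar> \<le> int (s_count w)"
proof (induction w)
  case (Cons x w)
  then show ?case by (cases x; cases "fst x") (auto simp: letter_shift_def s_count_def)
qed (simp add: s_count_def)

lemma moves_A_sym: "x \<in> A_sym \<Longrightarrow> t_count x + s_count x \<le> 1"
  by (auto simp: A_sym_def A_set_def winv_def flip_def t_count_def s_count_def)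

lemma moves_concat_A_sym: "set ws \<subseteq> A_sym \<Longrightarrow> t_count (concat ws) + s_count (concat ws) \<le> length ws"
proof (induction ws)
  case (Cons x ws)
  then show ?case using moves_A_sym[of x] by simp
qed (simp add: t_count_def s_count_def)

lemma closed_word_spread:
  assumes "cursor w = 0" and "p \<in> visited w" and "p' \<in> visited w"
  shows "2 * \<bar>fst p - fst p'\<bar> \<le> int (t_count w)"
    and "2 * \<bar>snd p - snd p'\<bar> \<le> int (s_count w)"
proof -
  have ordered: "2 * \<bar>fst (cursor u) - fst (cursor v)\<bar> \<le> int (t_count w) \<and>
      2 * \<bar>snd (cursor u) - snd (cursor v)\<bar> \<le> int (s_count w)"
    if uv: "prefix u v" and vw: "prefix v w" for u v
  proof -
    obtain b where v: "v = u @ b" using uv by (auto simp: prefix_def)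
    obtain c where "w = v @ c" using vw by (auto simp: prefix_def)
    with v have w: "w = u @ b @ c" by simp
    have "cursor u + cursor b + cursor c = 0" using w assms(1) by (simp add: add.assoc)
    then have "fst (cursor u) + fst (cursor b) + fst (cursor c) = 0"
        "snd (cursor u) + snd (cursor b) + snd (cursor c) = 0"
      by (metis fst_add fst_zero, metis snd_add snd_zero)
    moreover have "\<bar>fst (cursor u)\<bar> \<le> int (t_count u)" "\<bar>fst (cursor b)\<bar> \<le> int (t_count b)"
        "\<bar>fst (cursor c)\<bar> \<le> int (t_count c)" "\<bar>snd (cursor u)\<bar> \<le> int (s_count u)"
        "\<bar>snd (cursor b)\<bar> \<le> int (s_count b)" "\<bar>snd (cursor c)\<bar> \<le> int (s_count c)"
      by (simp_all add: abs_fst_cursor_le abs_snd_cursor_le)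
    ultimately show ?thesis unfolding v w by auto
  qed
  obtain u v where "prefix u w" "p = cursor u" "prefix v w" "p' = cursor v"
    using assms(2,3) by (auto simp: visited_def)
  with ordered[of u v] ordered[of v u] show
    "2 * \<bar>fst p - fst p'\<bar> \<le> int (t_count w)" "2 * \<bar>snd p - snd p'\<bar> \<le> int (s_count w)"
    using prefix_same_cases[of u w v] by (auto simp: abs_minus_commute)
qed

lemma visited_abs_le: "p \<in> visited w \<Longrightarrow> \<bar>fst p\<bar> + \<bar>snd p\<bar> \<le> int (t_count w + s_count w)"
proof -
  assume "p \<in> visited w"
  then obtain u v where "w = u @ v" "p = cursor u" by (auto simp: visited_def prefix_def)
  then show ?thesis using abs_fst_cursor_le[of u] abs_snd_cursor_le[of u] by simp
qed

lemma corner_lamps_length_bound: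
  fixes k :: nat
  assumes "1 \<le> k" and "set ws \<subseteq> A_sym" and "G_eq (concat ws) g" and "cursor g = 0"
    and "toggled 0 g = {(int k, int k), (- int k, - int k)}"
  shows "8 * k \<le> length ws"
proof -
  define w where "w = concat ws"
  have eq: "G_eq w g" using assms(3) by (simp add: w_def)
  have closed: "cursor w = 0" using G_eq_cursor[OF eq] assms(4) by simp
  have visit: "\<exists>p \<in> visited w. \<phi> p"
    if "pascal \<phi>" and "odd_on \<phi> {(int k, int k), (- int k, - int k)}" for \<phi>
    using pascal_visited[OF that(1) eq] that(2) assms(5) by simp
  obtain p1 where p1: "p1 \<in> visited w" "right_cone (p1 + (- int k, - int k))"
    using visit[OF pascal_shift[OF pascal_right_cone, of "(- int k, - int k)"]] assms(1)
    by (auto simp: odd_on_pair right_cone_def odd_binom_0 odd_binom_neg)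
  obtain p2 where p2: "p2 \<in> visited w" "upper_cone (p2 + (- int k, - int k))"
    using visit[OF pascal_shift[OF pascal_upper_cone, of "(- int k, - int k)"]] assms(1)
    by (auto simp: odd_on_pair upper_cone_def odd_binom_0 odd_binom_neg)
  have "odd_on (\<lambda>p. lower_left_cone (p + (int k, int k))) {(int k, int k), (- int k, - int k)}"
    using odd_on_pair[of "\<lambda>p. lower_left_cone (p + (int k, int k))" "(- int k, - int k)"] assms(1)
    by (simp add: insert_commute lower_left_cone_def odd_binom_0 odd_binom_neg)
  then obtain p3 where p3: "p3 \<in> visited w" "lower_left_cone (p3 + (int k, int k))"
    using visit[OF pascal_shift[OF pascal_lower_left_cone]] by blast
  have "int k \<le> fst p1"
    using p1(2) odd_binom_neg by (force simp: right_cone_def)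
  moreover have "int k \<le> snd p2"
    using p2(2) odd_binom_neg by (force simp: upper_cone_def)
  moreover have "fst p3 + snd p3 \<le> - 2 * int k"
    using p3(2) odd_binom_neg by (force simp: lower_left_cone_def)
  moreover have "2 * \<bar>fst p1 - fst p3\<bar> \<le> int (t_count w)"
    using closed_word_spread(1)[OF closed p1(1) p3(1)] .
  moreover have "2 * \<bar>snd p2 - snd p3\<bar> \<le> int (s_count w)"
    using closed_word_spread(2)[OF closed p2(1) p3(1)] .
  moreover have "int (t_count w) + int (s_count w) \<le> int (length ws)"
    using moves_concat_A_sym[OF assms(2)] by (simp add: w_def)
  ultimately have "8 * int k \<le> int (length ws)" by arith
  then show ?thesis by linarith
qed

section \<open>Upper bound\<close>

lemma letter_word_A_sym:
  assumes "fst d \<noteq> Ga"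
  shows "(if b1 then [(Ga, snd d)] else []) @ [d] @ (if b2 then [(Ga, snd d)] else []) \<in> A_sym"
proof -
  obtain g b where "d = (g, b)" by fastforce
  with assms show ?thesis
    by (cases g; cases b; cases b1; cases b2) (auto simp: A_sym_def A_set_def winv_def flip_def)
qed

lemma letter_word_toggled:
  assumes "fst d \<noteq> Ga"
  shows "toggled q ((if b1 then [(Ga, snd d)] else []) @ [d] @ (if b2 then [(Ga, snd d)] else []))
    = (if b1 then {q} else {}) \<union> (if b2 then {q + letter_shift d} else {})"
proof -
  have "letter_shift d \<noteq> 0"
    using assms by (cases d; cases "fst d") (auto simp: letter_shift_def zero_prod_def)
  with assms show ?thesis by (cases b1; cases b2) auto
qed

text \<open>Any set of points visited by a path of moves can be lit by a word over \<open>A\<close> of the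
  same length: a lamp is switched on by attaching an \<open>a\<close> to the move that reaches it, which
  is why \<open>A\<close> contains \<open>at\<close>, \<open>ta\<close>, \<open>ata\<close>, \<open>as\<close>, \<open>sa\<close> and \<open>asa\<close>.\<close>

lemma light_visited:
  assumes "Ga \<notin> fst ` set mv" and "mv \<noteq> []" and "T \<subseteq> visited mv"
  shows "\<exists>ws. set ws \<subseteq> A_sym \<and> length ws = length mv \<and> cursor (concat ws) = cursor mv
    \<and> toggled 0 (concat ws) = T"
  using assms
proof (induction mv arbitrary: T rule: rev_induct)
  case (snoc d mv)
  have d: "fst d \<noteq> Ga" using snoc.prems(1) by force
  define q where "q = cursor mv + letter_shift d"
  have visited_snoc: "visited (mv @ [d]) = insert q (visited mv)"
    using cursor_in_visited_self[of mv]
    by (auto simp: visited_append visited_Cons q_def)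
  show ?case
  proof (cases "mv = []")
    case True
    define lw where "lw = (if 0 \<in> T then [(Ga, snd d)] else []) @ [d]
      @ (if letter_shift d \<in> T then [(Ga, snd d)] else [])"
    have "T \<subseteq> {0, letter_shift d}" using snoc.prems(3) visited_snoc True by (auto simp: q_def)
    then have "toggled 0 lw = T" using letter_word_toggled[OF d] by (auto simp: lw_def)
    moreover have "lw \<in> A_sym" unfolding lw_def by (rule letter_word_A_sym[OF d])
    ultimately show ?thesis using True d
      by (intro exI[of _ "[lw]"]) (simp add: lw_def letter_shift_Ga)
  next
    case False
    obtain ws where ws: "set ws \<subseteq> A_sym" "length ws = length mv" "cursor (concat ws) = cursor mv"
        "toggled 0 (concat ws) = T \<inter> visited mv"
      using snoc.IH[of "T \<inter> visited mv"] snoc.prems(1) False by auto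
    define lw where "lw = (if False then [(Ga, snd d)] else []) @ [d]
      @ (if q \<in> T \<and> q \<notin> visited mv then [(Ga, snd d)] else [])"
    have "lw \<in> A_sym" unfolding lw_def by (rule letter_word_A_sym[OF d])
    moreover have "toggled 0 (concat ws @ lw) = T"
    proof -
      have "toggled (cursor mv) lw = (if q \<in> T \<and> q \<notin> visited mv then {q} else {})"
        using letter_word_toggled[OF d, of "cursor mv" False] by (simp add: lw_def q_def)
      then show ?thesis
        using ws(3,4) snoc.prems(3) visited_snoc by (auto simp: toggled_append)
    qed
    moreover have "cursor (concat ws @ lw) = cursor (mv @ [d])"
      using ws(3) d by (simp add: lw_def letter_shift_Ga)
    ultimately show ?thesis using ws(1,2) by (intro exI[of _ "ws @ [lw]"]) auto
  qed
qed simp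

lemma letter_shift_moves [simp]:
  "letter_shift (Gt, False) = (1, 0)" "letter_shift (Gt, True) = (- 1, 0)"
  "letter_shift (Gs, False) = (0, 1)" "letter_shift (Gs, True) = (0, - 1)"
  by (simp_all add: letter_shift_def)

lemma cursor_replicate [simp]:
  "cursor (replicate n x) = (int n * fst (letter_shift x), int n * snd (letter_shift x))"
  by (induction n) (simp_all add: algebra_simps prod_eq_iff)

lemma cursor_in_visited_prefix: "cursor u \<in> visited (u @ v)"
  using cursor_in_visited_self[of u] by (simp add: visited_append)

lemma visited_infix: "p \<in> visited v \<Longrightarrow> cursor u + p \<in> visited (u @ v @ w)"
  by (simp add: visited_append)

lemma visited_replicate: "i \<le> n \<Longrightarrow> cursor (replicate i x) \<in> visited (replicate n x)"
  using cursor_in_visited_prefix[of "replicate i x" "replicate (n - i) x"]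
  by (simp add: replicate_add[symmetric])

lemma closed_corner_tour:
  obtains mv where "Ga \<notin> fst ` set mv" "length mv = 8 * k" "cursor mv = 0"
    "(int k, int k) \<in> visited mv" "(- int k, - int k) \<in> visited mv"
proof
  define a where "a = replicate k (Gt, False) @ replicate k (Gs, False)"
  define b where "b = replicate (2 * k) (Gt, True) @ replicate (2 * k) (Gs, True)"
  define mv where "mv = a @ b @ a"
  show "Ga \<notin> fst ` set mv" "length mv = 8 * k" "cursor mv = 0"
    by (auto simp: mv_def a_def b_def zero_prod_def)
  show "(int k, int k) \<in> visited mv"
    using cursor_in_visited_prefix[of a "b @ a"] by (simp add: mv_def a_def)
  show "(- int k, - int k) \<in> visited mv"
    using cursor_in_visited_prefix[of "a @ b" a] by (simp add: mv_def a_def b_def)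
qed

lemma column_tour_up:
  fixes k N :: nat
  assumes "N \<le> k" and "\<bar>fst e\<bar> \<le> int k" and "\<bar>snd e\<bar> \<le> int k" and "0 \<le> fst e + snd e"
  obtains mv where "Ga \<notin> fst ` set mv" "length mv \<le> 8 * k" "cursor mv = e"
    "(int k, int k) \<in> visited mv" "(- int k, - int k) \<in> visited mv"
    "{int N} \<times> {- int k..int k} \<subseteq> visited mv"
proof
  define a where
    "a = replicate k (Gt, True) @ replicate k (Gs, True) @ replicate (N + k) (Gt, False)"
  define b where "b = replicate (2 * k) (Gs, False)"
  define c where "c = replicate (k - N) (Gt, False)"
  define d where
    "d = replicate (nat (int k - fst e)) (Gt, True) @ replicate (nat (int k - snd e)) (Gs, True)"
  define mv where "mv = a @ b @ c @ d"
  show "Ga \<notin> fst ` set mv" by (auto simp: mv_def a_def b_def c_def d_def)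
  show "length mv \<le> 8 * k" "cursor mv = e"
    using assms by (simp_all add: mv_def a_def b_def c_def d_def of_nat_diff abs_le_iff)
  show "(- int k, - int k) \<in> visited mv"
    using cursor_in_visited_prefix[of "replicate k (Gt, True) @ replicate k (Gs, True)"]
    by (simp add: mv_def a_def)
  show "(int k, int k) \<in> visited mv"
    using cursor_in_visited_prefix[of "a @ b @ c" d] assms(1)
    by (simp add: mv_def a_def b_def c_def)
  have "(int N, r) \<in> visited mv" if r: "- int k \<le> r" "r \<le> int k" for r
  proof -
    from r have "cursor (replicate (nat (r + int k)) (Gs, False)) \<in> visited b"
      unfolding b_def by (intro visited_replicate) linarith
    from visited_infix[OF this, of a "c @ d"] r show ?thesis by (simp add: mv_def a_def)
  qed
  then show "{int N} \<times> {- int k..int k} \<subseteq> visited mv" by auto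
qed

lemma column_tour_down:
  fixes k N :: nat
  assumes "N \<le> k" and "\<bar>fst e\<bar> \<le> int k" and "\<bar>snd e\<bar> \<le> int k" and "fst e + snd e < 0"
  obtains mv where "Ga \<notin> fst ` set mv" "length mv \<le> 8 * k" "cursor mv = e"
    "(int k, int k) \<in> visited mv" "(- int k, - int k) \<in> visited mv"
    "{int N} \<times> {- int k..int k} \<subseteq> visited mv"
proof
  define a where
    "a = replicate k (Gt, False) @ replicate k (Gs, False) @ replicate (k - N) (Gt, True)"
  define b where "b = replicate (2 * k) (Gs, True)"
  define c where "c = replicate (N + k) (Gt, True)"
  define d where
    "d = replicate (nat (fst e + int k)) (Gt, False) @ replicate (nat (snd e + int k)) (Gs, False)"
  define mv where "mv = a @ b @ c @ d"
  show "Ga \<notin> fst ` set mv" by (auto simp: mv_def a_def b_def c_def d_def)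
  show "length mv \<le> 8 * k" "cursor mv = e"
    using assms by (simp_all add: mv_def a_def b_def c_def d_def of_nat_diff abs_le_iff)
  show "(int k, int k) \<in> visited mv"
    using cursor_in_visited_prefix[of "replicate k (Gt, False) @ replicate k (Gs, False)"]
    by (simp add: mv_def a_def)
  show "(- int k, - int k) \<in> visited mv"
    using cursor_in_visited_prefix[of "a @ b @ c" d] assms(1)
    by (simp add: mv_def a_def b_def c_def of_nat_diff)
  have "(int N, r) \<in> visited mv" if r: "- int k \<le> r" "r \<le> int k" for r
  proof -
    from r have "cursor (replicate (nat (int k - r)) (Gs, True)) \<in> visited b"
      unfolding b_def by (intro visited_replicate) linarith
    from visited_infix[OF this, of a "c @ d"] r assms(1)
    show ?thesis by (simp add: mv_def a_def of_nat_diff)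
  qed
  then show "{int N} \<times> {- int k..int k} \<subseteq> visited mv" by auto
qed

lemma column_tour:
  fixes k N :: nat
  assumes "N \<le> k" and "\<bar>fst e\<bar> \<le> int k" and "\<bar>snd e\<bar> \<le> int k"
  obtains mv where "Ga \<notin> fst ` set mv" "length mv \<le> 8 * k" "cursor mv = e"
    "(int k, int k) \<in> visited mv" "(- int k, - int k) \<in> visited mv"
    "{int N} \<times> {- int k..int k} \<subseteq> visited mv"
proof (cases "0 \<le> fst e + snd e")
  case True
  from assms True that show ?thesis by (rule column_tour_up)
next
  case False
  then have "fst e + snd e < 0" by simp
  from assms this that show ?thesis by (rule column_tour_down)
qed

section \<open>Word metric and depth\<close>

lemma singleton_A_sym: "[x] \<in> A_sym"
proof -
  obtain g b where x: "x = (g, b)" by fastforce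
  show ?thesis by (cases g; cases b) (auto simp: x A_sym_def A_set_def winv_def flip_def)
qed

lemma dA_candidates_nonempty:
  "{length ws | ws. set ws \<subseteq> A_sym \<and> G_eq (concat ws) (winv g @ h)} \<noteq> {}"
proof -
  let ?ws = "map (\<lambda>x. [x]) (winv g @ h)"
  have "set ?ws \<subseteq> A_sym \<and> G_eq (concat ?ws) (winv g @ h)"
    by (auto simp: singleton_A_sym G_eq.G_refl)
  then show ?thesis by blast
qed

lemma dA_attained:
  obtains ws where "set ws \<subseteq> A_sym" "G_eq (concat ws) (winv g @ h)" "length ws = dA g h"
proof -
  have "dA g h \<in> {length ws | ws. set ws \<subseteq> A_sym \<and> G_eq (concat ws) (winv g @ h)}"
    unfolding dA_def by (rule Inf_nat_def1[OF dA_candidates_nonempty])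
  with that show thesis by auto
qed

lemma dA_le: "set ws \<subseteq> A_sym \<Longrightarrow> G_eq (concat ws) (winv g @ h) \<Longrightarrow> dA g h \<le> length ws"
  unfolding dA_def by (rule cInf_lower) (auto intro: bdd_belowI[of _ 0])

lemma dA_ge:
  "(\<And>ws. set ws \<subseteq> A_sym \<Longrightarrow> G_eq (concat ws) (winv g @ h) \<Longrightarrow> n \<le> length ws) \<Longrightarrow> n \<le> dA g h"
  unfolding dA_def by (rule cInf_greatest[OF dA_candidates_nonempty]) auto

lemma normA_le: "set ws \<subseteq> A_sym \<Longrightarrow> abs_grp (concat ws) = abs_grp h \<Longrightarrow> normA h \<le> length ws"
  unfolding normA_def by (rule dA_le) (simp_all add: grp.abs_eq_iff)

lemma normA_replicate_t: "n \<le> normA (replicate n (Gt, False))"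
  unfolding normA_def
proof (rule dA_ge)
  fix ws
  assume "set ws \<subseteq> A_sym" and "G_eq (concat ws) (winv [] @ replicate n (Gt, False))"
  then have "cursor (concat ws) = (int n, 0)" using G_eq_cursor by simp
  then have "int n \<le> int (t_count (concat ws))" using abs_fst_cursor_le[of "concat ws"] by simp
  moreover have "t_count (concat ws) + s_count (concat ws) \<le> length ws"
    using moves_concat_A_sym \<open>set ws \<subseteq> A_sym\<close> by blast
  ultimately show "n \<le> length ws" by linarith
qed

lemma corner_element:
  fixes k :: nat
  assumes "1 \<le> k"
  obtains g where "cursor g = 0" "toggled 0 g = {(int k, int k), (- int k, - int k)}"
    "normA g = 8 * k"
proof -
  obtain mv where mv: "Ga \<notin> fst ` set mv" "length mv = 8 * k" "cursor mv = 0"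
      "(int k, int k) \<in> visited mv" "(- int k, - int k) \<in> visited mv"
    by (rule closed_corner_tour)
  moreover have "mv \<noteq> []" using mv(2) assms by auto
  ultimately obtain ws where ws: "set ws \<subseteq> A_sym" "length ws = 8 * k" "cursor (concat ws) = 0"
      "toggled 0 (concat ws) = {(int k, int k), (- int k, - int k)}"
    using light_visited[of mv "{(int k, int k), (- int k, - int k)}"] by auto
  have "normA (concat ws) \<le> 8 * k" using normA_le[OF ws(1)] ws(2) by simp
  moreover have "8 * k \<le> normA (concat ws)"
    unfolding normA_def using corner_lamps_length_bound[OF assms _ _ ws(3,4)] by (auto intro: dA_ge)
  ultimately show thesis using that ws(3,4) by simp
qed

lemma short_word_normal_form:
  fixes N :: nat
  assumes "set ws \<subseteq> A_sym" and "length ws < N"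
  obtains D where "finite D" "D \<subseteq> {int N} \<times> {- 3 * int N..int N}"
    "abs_grp (concat ws) = lamps D + transl (cursor (concat ws))"
    "\<bar>fst (cursor (concat ws))\<bar> < int N" "\<bar>snd (cursor (concat ws))\<bar> < int N"
proof -
  let ?u = "concat ws"
  have small: "int (t_count ?u + s_count ?u) < int N"
    using moves_concat_A_sym[OF assms(1)] assms(2) by linarith
  have near: "\<forall>(m, n) \<in> toggled 0 ?u. m \<le> int N \<and> - 3 * int N \<le> n - (int N - m) \<and> n \<le> int N"
  proof clarify
    fix m n
    assume "(m, n) \<in> toggled 0 ?u"
    then have "(m, n) \<in> visited ?u" using toggled_subset_visited[of 0 ?u] by auto
    from visited_abs_le[OF this] have "\<bar>m\<bar> + \<bar>n\<bar> \<le> int (t_count ?u + s_count ?u)" by simp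
    with small show "m \<le> int N \<and> - 3 * int N \<le> n - (int N - m) \<and> n \<le> int N" by arith
  qed
  obtain D where D: "finite D" "D \<subseteq> {int N} \<times> {- 3 * int N..int N}" "lamps (toggled 0 ?u) = lamps D"
    using finite_toggled near by (rule lamps_push_to_column)
  show thesis
  proof (rule that[OF D(1,2)])
    show "abs_grp ?u = lamps D + transl (cursor ?u)"
      using abs_grp_normal_form[of ?u] D(3) by simp
    show "\<bar>fst (cursor ?u)\<bar> < int N" "\<bar>snd (cursor ?u)\<bar> < int N"
      using abs_fst_cursor_le[of ?u] abs_snd_cursor_le[of ?u] small by linarith+
  qed
qed

lemma lamps_near_corners_norm:
  fixes k N :: nat
  assumes "1 \<le> k" and "N \<le> k" and "D \<subseteq> {int N} \<times> {- int k..int k}"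
    and "\<bar>fst e\<bar> \<le> int k" and "\<bar>snd e\<bar> \<le> int k"
    and "abs_grp h = lamps ({(int k, int k), (- int k, - int k)} \<union> D) + transl e"
  shows "normA h \<le> 8 * k"
proof -
  let ?T = "{(int k, int k), (- int k, - int k)} \<union> D"
  obtain mv where mv: "Ga \<notin> fst ` set mv" "length mv \<le> 8 * k" "cursor mv = e"
      "(int k, int k) \<in> visited mv" "(- int k, - int k) \<in> visited mv"
      "{int N} \<times> {- int k..int k} \<subseteq> visited mv"
    using assms(2,4,5) by (rule column_tour)
  have "mv \<noteq> []" using mv(4) assms(1) by (auto simp: zero_prod_def)
  moreover have "?T \<subseteq> visited mv" using mv(4-6) assms(3) by blast
  ultimately obtain ws where ws: "set ws \<subseteq> A_sym" "length ws = length mv"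
      "cursor (concat ws) = cursor mv" "toggled 0 (concat ws) = ?T"
    using light_visited[OF mv(1)] by meson
  then have "abs_grp (concat ws) = abs_grp h"
    using abs_grp_normal_form[of "concat ws"] assms(6) mv(3) by simp
  from normA_le[OF ws(1) this] show ?thesis using ws(2) mv(2) by simp
qed

lemma near_corner_element_norm:
  fixes k N :: nat
  assumes "1 \<le> N" and "3 * N \<le> k" and "cursor g = 0"
    and "toggled 0 g = {(int k, int k), (- int k, - int k)}" and "dA g h < N"
  shows "normA h \<le> 8 * k"
proof -
  let ?T = "{(int k, int k), (- int k, - int k)}"
  obtain ws where ws: "set ws \<subseteq> A_sym" "G_eq (concat ws) (winv g @ h)" "length ws < N"
    using dA_attained assms(5) by metis
  from ws(1,3) obtain D where D: "finite D" "D \<subseteq> {int N} \<times> {- 3 * int N..int N}"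
      "abs_grp (concat ws) = lamps D + transl (cursor (concat ws))"
      "\<bar>fst (cursor (concat ws))\<bar> < int N" "\<bar>snd (cursor (concat ws))\<bar> < int N"
    by (rule short_word_normal_form)
  have "abs_grp h = abs_grp g + abs_grp (concat ws)"
    using ws(2) by (simp add: grp.abs_eq_iff[symmetric] abs_grp_append abs_grp_winv add.assoc)
  also have "abs_grp g = lamps ?T"
    using abs_grp_normal_form[of g] assms(3,4) by simp
  also have "lamps ?T + abs_grp (concat ws) = lamps (sym_diff ?T D) + transl (cursor (concat ws))"
    using D(1,3) lamps_sym_diff[of D ?T] by (simp add: add.assoc[symmetric])
  also have "sym_diff ?T D = ?T \<union> D"
    using D(2) assms(1,2) by auto
  finally have "abs_grp h = lamps (?T \<union> D) + transl (cursor (concat ws))" .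
  moreover have "D \<subseteq> {int N} \<times> {- int k..int k}" using D(2) assms(2) by auto
  ultimately show ?thesis
    using lamps_near_corners_norm[of k N D "cursor (concat ws)"] assms(1,2) D(4,5) by simp
qed

lemma depthA_ge:
  assumes "normA g < normA h'" and "\<And>h. normA g < normA h \<Longrightarrow> N \<le> dA g h"
  shows "N \<le> depthA g"
  unfolding depthA_def using assms by (intro cInf_greatest) auto

theorem theorem1p1:
  shows "\<forall>N::nat. N \<ge> 1 \<longrightarrow> (\<exists>g::word. depthA g \<ge> N)"
proof (intro allI impI)
  fix N :: nat
  assume "N \<ge> 1"
  then obtain g where g: "cursor g = 0"
      "toggled 0 g = {(int (3 * N), int (3 * N)), (- int (3 * N), - int (3 * N))}"
      "normA g = 8 * (3 * N)"
    using corner_element[of "3 * N"] by auto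
  have "N \<le> depthA g"
  proof (rule depthA_ge)
    show "normA g < normA (replicate (8 * (3 * N) + 1) (Gt, False))"
      using normA_replicate_t g(3) by (metis Suc_eq_plus1 Suc_le_lessD)
  next
    fix h
    assume "normA g < normA h"
    then show "N \<le> dA g h"
      using near_corner_element_norm[OF \<open>N \<ge> 1\<close> order_refl g(1,2), of h] g(3) by linarith
  qed
  then show "\<exists>g. depthA g \<ge> N" by blast
qed

end
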